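(* Let $k\ge0$ be an integer and let $S=B_k(C)$ or $S=B_k(e)$. Let $\mu$ be an eigenvector process with eigenvalue $\lambda$, $|\lambda|<d$, and let $\mu_S$ denote its marginal on $\mathbb{R}^S$. Then the linear span of the support of $\mu_S$ equals $W_\lambda(S)$.
   Context: $T_d$ is the infinite $d$-regular tree ($d\ge 3$), vertex set $V_d$, root $o$. For $F\subseteq V_d$, $B_k(F)$ is the set of vertices at distance at most $k$ from $F$; $C=B_1(o)$ (the root and its $d$ neighbors) and $e$ is a fixed edge (viewed as a set of two vertices). For finite $F\subseteq V_d$ and $\lambda\in\mathbb{R}$, $W_\lambda(F)$ is the linear subspace of $f\in\mathbb{R}^F$ with $\lambda f(u)=\sum_{w\sim u}f(w)$ for every $u\in F$ with $B_1(u)\subseteq F$. An eigenvector process with eigenvalue $\lambda$ is a family $\{X_u\}_{u\in V_d}$ of real random variables of variance $1$, with law invariant under all automorphisms of $T_d$, satisfying $\sum_{u\sim o}X_u=\lambda X_o$ almost surely. *)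

theory Defs
  imports "HOL-Probability.Probability" "HOL-Library.Function_Algebras"
begin

text \<open>The infinite d-regular tree T_d, realised as the Cayley graph of the free product
of d copies of Z/2: vertices are words over the letters 0..d-1 with no two consecutive
equal letters; the root is the empty word; u and v are adjacent iff one is obtained from
the other by appending one letter.\<close>

definition tree_vertices :: "nat \<Rightarrow> nat list set" where
  "tree_vertices d = {w. set w \<subseteq> {..<d} \<and> (\<forall>i. Suc i < length w \<longrightarrow> w ! i \<noteq> w ! Suc i)}"

definition tree_adj :: "nat \<Rightarrow> nat list \<Rightarrow> nat list \<Rightarrow> bool" where
  "tree_adj d u v \<longleftrightarrow> u \<in> tree_vertices d \<and> v \<in> tree_vertices d \<and>
     ((\<exists>a. v = u @ [a]) \<or> (\<exists>a. u = v @ [a]))"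

definition tree_root :: "nat list" where
  "tree_root = []"

definition tree_nbrs :: "nat \<Rightarrow> nat list \<Rightarrow> nat list set" where
  "tree_nbrs d u = {v. tree_adj d u v}"

text \<open>Automorphisms of T_d (as bijections of the vertex set preserving adjacency);
maps are arbitrary outside the vertex set.\<close>
definition tree_aut :: "nat \<Rightarrow> (nat list \<Rightarrow> nat list) \<Rightarrow> bool" where
  "tree_aut d \<phi> \<longleftrightarrow> bij_betw \<phi> (tree_vertices d) (tree_vertices d) \<and>
     (\<forall>u\<in>tree_vertices d. \<forall>v\<in>tree_vertices d. tree_adj d u v \<longleftrightarrow> tree_adj d (\<phi> u) (\<phi> v))"

fun tree_ball :: "nat \<Rightarrow> nat \<Rightarrow> nat list set \<Rightarrow> nat list set" where
  "tree_ball d 0 F = F \<inter> tree_vertices d"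
| "tree_ball d (Suc k) F = tree_ball d k F \<union> {v. \<exists>u\<in>tree_ball d k F. tree_adj d u v}"

definition tree_C :: "nat \<Rightarrow> nat list set" where
  "tree_C d = tree_ball d 1 {tree_root}"

definition tree_edge :: "nat list set" where
  "tree_edge = {tree_root, [0]}"

text \<open>W_lambda(F), with R^F identified with functions V -> real vanishing outside F.\<close>
definition W_space :: "nat \<Rightarrow> real \<Rightarrow> nat list set \<Rightarrow> (nat list \<Rightarrow> real) set" where
  "W_space d l F = {f. (\<forall>u. u \<notin> F \<longrightarrow> f u = 0) \<and>
     (\<forall>u\<in>F. tree_ball d 1 {u} \<subseteq> F \<longrightarrow> l * f u = (\<Sum>w\<in>tree_nbrs d u. f w))}"

definition eigenvector_process ::
  "nat \<Rightarrow> real \<Rightarrow> 'a measure \<Rightarrow> (nat list \<Rightarrow> 'a \<Rightarrow> real) \<Rightarrow> bool" where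
  "eigenvector_process d l M X \<longleftrightarrow>
     prob_space M \<and>
     (\<forall>u\<in>tree_vertices d. X u \<in> borel_measurable M) \<and>
     (\<forall>u\<in>tree_vertices d. integrable M (\<lambda>\<omega>. (X u \<omega>)\<^sup>2) \<and>
        (\<integral>\<omega>. (X u \<omega> - (\<integral>\<omega>'. X u \<omega>' \<partial>M))\<^sup>2 \<partial>M) = 1) \<and>
     (\<forall>\<phi>. tree_aut d \<phi> \<longrightarrow>
        distr M (PiM (tree_vertices d) (\<lambda>_. borel)) (\<lambda>\<omega>. \<lambda>u\<in>tree_vertices d. X (\<phi> u) \<omega>)
      = distr M (PiM (tree_vertices d) (\<lambda>_. borel)) (\<lambda>\<omega>. \<lambda>u\<in>tree_vertices d. X u \<omega>)) \<and>
     (AE \<omega> in M. (\<Sum>u\<in>tree_nbrs d tree_root. X u \<omega>) = l * X tree_root \<omega>)"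

definition marginal :: "'a measure \<Rightarrow> (nat list \<Rightarrow> 'a \<Rightarrow> real) \<Rightarrow> nat list set \<Rightarrow> (nat list \<Rightarrow> real) set \<Rightarrow> real" where
  "marginal M X S A = measure M {\<omega> \<in> space M. (\<lambda>u. if u \<in> S then X u \<omega> else 0) \<in> A}"

definition marginal_support :: "'a measure \<Rightarrow> (nat list \<Rightarrow> 'a \<Rightarrow> real) \<Rightarrow> nat list set \<Rightarrow> (nat list \<Rightarrow> real) set" where
  "marginal_support M X S = {x. (\<forall>u. u \<notin> S \<longrightarrow> x u = 0) \<and>
     (\<forall>\<epsilon>>0. marginal M X S {y. (\<forall>u. u \<notin> S \<longrightarrow> y u = 0) \<and> (\<forall>u\<in>S. \<bar>y u - x u\<bar> < \<epsilon>)} > 0)}"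

definition fun_span :: "(nat list \<Rightarrow> real) set \<Rightarrow> (nat list \<Rightarrow> real) set" where
  "fun_span A = module.span (\<lambda>(c::real) f. (\<lambda>u. c * f u)) A"

end

theory Submission
  imports Defs "HOL-Combinatorics.Transposition"
begin

text \<open>
  Since the eigen equation holds almost surely and its defect is continuous, it holds at every
  point of the support of \<open>\<mu>\<^sub>S\<close>, so the span of the support lies in \<open>W\<^sub>\<lambda>(S)\<close>.
  Conversely, a linear functional \<open>c\<close> on \<open>\<real>\<^sup>S\<close> vanishing on the support annihilates
  \<open>\<Sum>\<^sub>u c\<^sub>u X\<^sub>u\<close> almost surely, hence every function \<open>u \<mapsto> E[X\<^sub>u X\<^sub>v]\<close> with \<open>v \<in> S\<close>.
  By invariance these second moments are, near a vertex, given by three numbers \<open>cov0\<close>,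
  \<open>cov1\<close>, \<open>cov2\<close> (distance 0, 1, 2), and \<open>\<bar>\<lambda>\<bar> < d\<close> forces \<open>\<bar>cov1\<bar> < cov0\<close> and
  \<open>cov2 < cov0\<close>. Hence every \<open>f \<in> W\<^sub>\<lambda>(S)\<close> can be written on \<open>S\<close> as
  \<open>\<Sum>\<^sub>v \<gamma>\<^sub>v E[X\<^sub>\<cdot> X\<^sub>v]\<close>: \<open>\<gamma>\<close> is found on the centre (the root or the edge) by solving
  a nonsingular system, and then level by level outwards from the differences of \<open>f\<close> between
  siblings. So \<open>c\<close> annihilates \<open>W\<^sub>\<lambda>(S)\<close> too.
\<close>

hide_const (open) Finite_Cartesian_Product.transpose

section \<open>The tree\<close>

lemma tree_vertices_iff: "w \<in> tree_vertices d \<longleftrightarrow> set w \<subseteq> {..<d} \<and> successively (\<noteq>) w"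
  unfolding tree_vertices_def successively_conv_nth by auto

lemma Nil_in_tree_vertices [simp]: "[] \<in> tree_vertices d"
  by (simp add: tree_vertices_iff)

lemma singleton_in_tree_vertices [simp]: "[a] \<in> tree_vertices d \<longleftrightarrow> a < d"
  by (simp add: tree_vertices_iff)

lemma snoc_in_tree_vertices:
  "u @ [a] \<in> tree_vertices d \<longleftrightarrow> u \<in> tree_vertices d \<and> a < d \<and> (u = [] \<or> last u \<noteq> a)"
  by (auto simp: tree_vertices_iff successively_append_iff)

lemma Cons_in_tree_vertices:
  "a # w \<in> tree_vertices d \<longleftrightarrow> a < d \<and> w \<in> tree_vertices d \<and> (w = [] \<or> a \<noteq> hd w)"
  by (auto simp: tree_vertices_iff successively_Cons)

lemma append_in_tree_vertices:
  "xs @ ys \<in> tree_vertices d \<longleftrightarrow>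
     xs \<in> tree_vertices d \<and> ys \<in> tree_vertices d \<and> (xs = [] \<or> ys = [] \<or> last xs \<noteq> hd ys)"
  by (auto simp: tree_vertices_iff successively_append_iff)

lemma butlast_in_tree_vertices: "w \<in> tree_vertices d \<Longrightarrow> butlast w \<in> tree_vertices d"
  by (cases w rule: rev_cases) (auto simp: snoc_in_tree_vertices)

lemma tree_adj_sym: "tree_adj d u v \<longleftrightarrow> tree_adj d v u"
  by (auto simp: tree_adj_def)

lemma tree_adj_butlast:
  "w \<in> tree_vertices d \<Longrightarrow> w \<noteq> [] \<Longrightarrow> tree_adj d (butlast w) w"
  unfolding tree_adj_def
  by (metis append_butlast_last_id butlast_in_tree_vertices)

lemma tree_nbrs_eq:
  assumes "u \<in> tree_vertices d"
  shows "tree_nbrs d u =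
    {u @ [a] | a. a < d \<and> (u = [] \<or> last u \<noteq> a)} \<union> (if u = [] then {} else {butlast u})"
  using assms tree_adj_butlast[OF assms]
  by (auto simp: tree_nbrs_def tree_adj_def snoc_in_tree_vertices)

lemma finite_tree_nbrs [simp]: "finite (tree_nbrs d u)"
proof (rule finite_subset)
  show "tree_nbrs d u \<subseteq> (\<lambda>a. u @ [a]) ` {..<d} \<union> {butlast u}"
    by (auto simp: tree_nbrs_def tree_adj_def snoc_in_tree_vertices)
qed auto

lemma tree_nbrs_in_vertices: "v \<in> tree_nbrs d u \<Longrightarrow> v \<in> tree_vertices d"
  by (auto simp: tree_nbrs_def tree_adj_def)

lemma tree_nbrs_root: "tree_nbrs d [] = (\<lambda>a. [a]) ` {..<d}"
  by (auto simp: tree_nbrs_eq)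

lemma sum_tree_nbrs_root: "(\<Sum>w\<in>tree_nbrs d []. f w) = (\<Sum>a<d. f [a])"
  unfolding tree_nbrs_root by (subst sum.reindex) (auto simp: inj_on_def)

lemma tree_ball_subset_vertices: "tree_ball d k F \<subseteq> tree_vertices d"
  by (induction k) (auto simp: tree_adj_def)

lemma tree_ball_tree_ball: "tree_ball d k (tree_ball d m F) = tree_ball d (k + m) F"
  by (induction k) (use tree_ball_subset_vertices in auto)

lemma tree_ball_1: "u \<in> tree_vertices d \<Longrightarrow> tree_ball d 1 {u} = insert u (tree_nbrs d u)"
  by (auto simp: tree_nbrs_def)

text \<open>Distance to the root (\<open>e = False\<close>) or to the edge \<open>{[], [0]}\<close> (\<open>e = True\<close>).\<close>

definition depth :: "bool \<Rightarrow> nat list \<Rightarrow> nat" where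
  "depth e w = (if e \<and> w \<noteq> [] \<and> hd w = 0 then length w - 1 else length w)"

lemma depth_Nil [simp]: "depth e [] = 0"
  by (simp add: depth_def)

lemma depth_snoc: "depth e (u @ [a]) = (if e \<and> u = [] \<and> a = 0 then 0 else Suc (depth e u))"
  by (cases u) (auto simp: depth_def)

lemma depth_adj: "tree_adj d u v \<Longrightarrow> depth e v \<le> Suc (depth e u)"
  by (auto simp: tree_adj_def depth_snoc)

lemma depth_butlast: "depth e w \<noteq> 0 \<Longrightarrow> depth e w = Suc (depth e (butlast w))"
  by (cases w rule: rev_cases) (auto simp: depth_snoc split: if_splits)

lemma depth_butlast_le: "depth e (butlast w) \<le> depth e w"
  by (cases w rule: rev_cases) (auto simp: depth_snoc)

lemma depth_prefix_mono: "prefix v w \<Longrightarrow> depth e v \<le> depth e w"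
  by (cases v) (auto simp: prefix_def depth_def)

lemma length_le_Suc_depth: "length w \<le> Suc (depth e w)"
  by (simp add: depth_def)

lemma depth_eq_0_iff: "depth e w = 0 \<longleftrightarrow> w = [] \<or> (e \<and> w = [0])"
  by (cases w) (auto simp: depth_def)

definition depth_ball :: "nat \<Rightarrow> bool \<Rightarrow> nat \<Rightarrow> nat list set" where
  "depth_ball d e K = {w \<in> tree_vertices d. depth e w \<le> K}"

lemma tree_ball_eq_depth_ball:
  assumes "d \<ge> 1"
  shows "tree_ball d k (if e then {[], [0]} else {[]}) = depth_ball d e k"
proof (induction k)
  case 0
  show ?case
    using assms by (auto simp: depth_ball_def depth_eq_0_iff)
next
  case (Suc k)
  have "w \<in> tree_ball d (Suc k) (if e then {[], [0]} else {[]})"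
    if w: "w \<in> tree_vertices d" "depth e w = Suc k" for w
  proof -
    have "w \<noteq> []" using w by auto
    then have "tree_adj d (butlast w) w" using tree_adj_butlast w by blast
    moreover have "butlast w \<in> depth_ball d e k"
      using w depth_butlast[of e w] butlast_in_tree_vertices by (simp add: depth_ball_def)
    ultimately show ?thesis using Suc by auto
  qed
  moreover have "w \<in> depth_ball d e (Suc k)" if "tree_adj d u w" "u \<in> depth_ball d e k" for u w
    using that depth_adj[OF that(1), of e] by (auto simp: depth_ball_def tree_adj_def)
  ultimately show ?case
    using Suc by (auto simp: depth_ball_def le_Suc_eq)
qed

lemma finite_depth_ball: "finite (depth_ball d e K)"
proof (rule finite_subset)
  show "depth_ball d e K \<subseteq> {xs. set xs \<subseteq> {..<d} \<and> length xs \<le> Suc K}"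
    using length_le_Suc_depth[of _ e] by (auto simp: depth_ball_def tree_vertices_iff intro: le_trans)
qed (rule finite_lists_length_le, simp)

lemma depth_ball_subset_vertices: "depth_ball d e K \<subseteq> tree_vertices d"
  by (auto simp: depth_ball_def)

definition centre :: "nat \<Rightarrow> bool \<Rightarrow> nat list set" where
  "centre d e = {w \<in> tree_vertices d. depth e w = 0}"

definition inner_ball :: "nat \<Rightarrow> bool \<Rightarrow> nat \<Rightarrow> nat list set" where
  "inner_ball d e K = {w \<in> tree_vertices d. depth e w < K}"

definition children :: "nat \<Rightarrow> bool \<Rightarrow> nat list \<Rightarrow> nat list set" where
  "children d e u = {w \<in> tree_nbrs d u. depth e w = Suc (depth e u)}"

lemma centre_eq: "d \<ge> 1 \<Longrightarrow> centre d e = (if e then {[], [0]} else {[]})"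
  by (auto simp: centre_def depth_eq_0_iff)

lemma centre_subset_depth_ball: "centre d e \<subseteq> depth_ball d e K"
  by (auto simp: centre_def depth_ball_def)

lemma inner_ball_subset_depth_ball: "inner_ball d e K \<subseteq> depth_ball d e K"
  by (auto simp: inner_ball_def depth_ball_def)

lemma finite_inner_ball: "finite (inner_ball d e K)"
  using finite_subset[OF inner_ball_subset_depth_ball finite_depth_ball] .

lemma children_subset_nbrs: "children d e u \<subseteq> tree_nbrs d u"
  by (auto simp: children_def)

lemma finite_children [simp]: "finite (children d e u)"
  using finite_subset[OF children_subset_nbrs] by simp

lemma children_in_vertices: "w \<in> children d e u \<Longrightarrow> w \<in> tree_vertices d"
  by (auto simp: children_def intro: tree_nbrs_in_vertices)

lemma depth_child: "w \<in> children d e u \<Longrightarrow> depth e w = Suc (depth e u)"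
  by (simp add: children_def)

lemma child_eq_snoc:
  assumes "u \<in> tree_vertices d" "w \<in> children d e u"
  obtains c where "w = u @ [c]"
proof -
  have "w \<in> tree_nbrs d u" "depth e w = Suc (depth e u)"
    using assms(2) by (auto simp: children_def)
  moreover have "depth e (butlast u) \<noteq> Suc (depth e u)"
    using depth_butlast_le[of e u] by simp
  ultimately show ?thesis using that assms(1) by (auto simp: tree_nbrs_eq split: if_splits)
qed

lemma butlast_child: "u \<in> tree_vertices d \<Longrightarrow> w \<in> children d e u \<Longrightarrow> butlast w = u"
  by (auto elim: child_eq_snoc)

lemma child_of_butlast:
  "w \<in> tree_vertices d \<Longrightarrow> depth e w \<noteq> 0 \<Longrightarrow> w \<in> children d e (butlast w)"
  using tree_adj_butlast[of w d] depth_butlast[of e w]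
  by (cases "w = []") (auto simp: children_def tree_nbrs_def)

lemma depth_nbr_not_child: "w \<in> tree_nbrs d u - children d e u \<Longrightarrow> depth e w \<le> depth e u"
  using depth_adj[of d u w e] by (auto simp: children_def tree_nbrs_def)

lemma children_nonempty:
  assumes "u \<in> tree_vertices d" "d \<ge> 3"
  shows "children d e u \<noteq> {}"
proof -
  define c where "c = (if u \<noteq> [] \<and> last u = 1 then 2 else (1::nat))"
  then have "c < d" "c \<noteq> 0" "u = [] \<or> last u \<noteq> c" using assms by auto
  then have "u @ [c] \<in> children d e u"
    using assms by (auto simp: children_def tree_nbrs_def tree_adj_def snoc_in_tree_vertices depth_snoc)
  then show ?thesis by blast
qed

lemma nbrs_inner_ball_subset:
  assumes "u \<in> inner_ball d e K"
  shows "tree_nbrs d u \<subseteq> depth_ball d e K"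
proof
  fix w assume w: "w \<in> tree_nbrs d u"
  then have "depth e w \<le> Suc (depth e u)" by (simp add: tree_nbrs_def depth_adj)
  then show "w \<in> depth_ball d e K"
    using assms tree_nbrs_in_vertices[OF w] by (simp add: inner_ball_def depth_ball_def)
qed

text \<open>Every vertex of \<open>depth_ball d e K\<close> outside the centre is a child of exactly one vertex
  of \<open>inner_ball d e K\<close>, namely its parent \<open>butlast\<close>.\<close>

lemma sum_depth_ball:
  fixes q :: "nat list \<Rightarrow> real"
  shows "(\<Sum>v\<in>depth_ball d e K. q v) =
    (\<Sum>v\<in>centre d e. q v) + (\<Sum>u\<in>inner_ball d e K. \<Sum>v\<in>children d e u. q v)"
proof -
  have "(\<Sum>v\<in>depth_ball d e K. q v) =
      (\<Sum>v\<in>depth_ball d e K - centre d e. q v) + (\<Sum>v\<in>centre d e. q v)"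
    by (rule sum.subset_diff[OF centre_subset_depth_ball finite_depth_ball])
  moreover have "(\<Sum>v\<in>depth_ball d e K - centre d e. q v) =
      (\<Sum>u\<in>inner_ball d e K. \<Sum>v\<in>{x \<in> depth_ball d e K - centre d e. butlast x = u}. q v)"
  proof (rule sum.group[symmetric])
    show "butlast ` (depth_ball d e K - centre d e) \<subseteq> inner_ball d e K"
      using depth_butlast[of e] butlast_in_tree_vertices
      by (fastforce simp: depth_ball_def centre_def inner_ball_def)
  qed (use finite_depth_ball finite_inner_ball in auto)
  moreover have "{x \<in> depth_ball d e K - centre d e. butlast x = u} = children d e u"
    if "u \<in> inner_ball d e K" for u
    using that child_of_butlast[of _ d e] butlast_child[of u d _ e]
      children_in_vertices[of _ d e u] depth_child[of _ d e u]
    by (auto simp: depth_ball_def centre_def inner_ball_def)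
  ultimately show ?thesis by (simp add: add.commute cong: sum.cong)
qed

lemma eq_if_sum_eq_and_diffs_eq:
  fixes F G :: "'a \<Rightarrow> real"
  assumes "finite A" "x \<in> A" "(\<Sum>w\<in>A. F w) = (\<Sum>w\<in>A. G w)"
    and "\<And>w. w \<in> A \<Longrightarrow> F w - F x = G w - G x"
  shows "F x = G x"
proof -
  have split: "(\<Sum>w\<in>A. H w) = real (card A) * H x + (\<Sum>w\<in>A. H w - H x)" for H :: "'a \<Rightarrow> real"
    by (simp add: sum_subtractf)
  have "(\<Sum>w\<in>A. F w - F x) = (\<Sum>w\<in>A. G w - G x)"
    using assms(4) by (rule sum.cong[OF refl])
  then have "real (card A) * F x = real (card A) * G x"
    using assms(3) split[of F] split[of G] by linarith
  moreover have "card A \<noteq> 0" using assms(1,2) by auto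
  ultimately show ?thesis by simp
qed

text \<open>Going down one level: the eigen equation at the parent fixes the sum over the children,
  and the differences between siblings then fix each child.\<close>

lemma eigen_solutions_eq_on_children:
  fixes F G :: "nat list \<Rightarrow> real"
  assumes F: "l * F u = (\<Sum>w\<in>tree_nbrs d u. F w)" and G: "l * G u = (\<Sum>w\<in>tree_nbrs d u. G w)"
    and parent: "F u = G u"
    and others: "\<And>w. w \<in> tree_nbrs d u - children d e u \<Longrightarrow> F w = G w"
    and siblings: "\<And>v w. v \<in> children d e u \<Longrightarrow> w \<in> children d e u \<Longrightarrow> F v - F w = G v - G w"
    and x: "x \<in> children d e u"
  shows "F x = G x"
proof -
  have split: "(\<Sum>w\<in>tree_nbrs d u. H w) =
      (\<Sum>w\<in>tree_nbrs d u - children d e u. H w) + (\<Sum>w\<in>children d e u. H w)" for H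
    by (rule sum.subset_diff[OF children_subset_nbrs finite_tree_nbrs])
  have "(\<Sum>w\<in>tree_nbrs d u - children d e u. F w) = (\<Sum>w\<in>tree_nbrs d u - children d e u. G w)"
    using others by (rule sum.cong[OF refl])
  then have "(\<Sum>w\<in>children d e u. F w) = (\<Sum>w\<in>children d e u. G w)"
    using F G parent split[of F] split[of G] by simp
  then show ?thesis
    using eq_if_sum_eq_and_diffs_eq[OF finite_children x] siblings[OF _ x] by blast
qed

lemma eigen_solutions_eq_on_depth_ball:
  fixes F G :: "nat list \<Rightarrow> real"
  assumes F: "\<And>u. u \<in> inner_ball d e K \<Longrightarrow> l * F u = (\<Sum>w\<in>tree_nbrs d u. F w)"
    and G: "\<And>u. u \<in> inner_ball d e K \<Longrightarrow> l * G u = (\<Sum>w\<in>tree_nbrs d u. G w)"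
    and centre: "\<And>b. b \<in> centre d e \<Longrightarrow> F b = G b"
    and siblings: "\<And>u v w. u \<in> inner_ball d e K \<Longrightarrow> v \<in> children d e u \<Longrightarrow>
      w \<in> children d e u \<Longrightarrow> F v - F w = G v - G w"
    and x: "x \<in> depth_ball d e K"
  shows "F x = G x"
proof -
  have "F x = G x" if "x \<in> depth_ball d e n" "n \<le> K" for n x
    using that
  proof (induction n arbitrary: x)
    case 0
    then show ?case using centre by (simp add: centre_def depth_ball_def)
  next
    case (Suc n)
    show ?case
    proof (cases "depth e x \<le> n")
      case True
      then show ?thesis using Suc by (simp add: depth_ball_def)
    next
      case False
      define u where "u = butlast x"
      have "x \<in> tree_vertices d" "depth e x = Suc n"
        using Suc.prems False by (auto simp: depth_ball_def)
      then have u: "u \<in> inner_ball d e K" "u \<in> depth_ball d e n" and xu: "x \<in> children d e u"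
        using Suc.prems depth_butlast[of e x] butlast_in_tree_vertices child_of_butlast
        by (auto simp: u_def inner_ball_def depth_ball_def)
      have "F w = G w" if "w \<in> tree_nbrs d u - children d e u" for w
        using depth_nbr_not_child[OF that] u(2) tree_nbrs_in_vertices[of w d u] that
          Suc.IH Suc.prems(2)
        by (simp add: depth_ball_def)
      then show ?thesis
        using eigen_solutions_eq_on_children[OF F[OF u(1)] G[OF u(1)] _ _ siblings[OF u(1)] xu]
          Suc.IH[OF u(2)] Suc.prems(2)
        by simp
    qed
  qed
  then show ?thesis using x by blast
qed

section \<open>Automorphisms\<close>

lemma tree_aut_in_vertices: "tree_aut d \<phi> \<Longrightarrow> u \<in> tree_vertices d \<Longrightarrow> \<phi> u \<in> tree_vertices d"
  unfolding tree_aut_def by (auto dest: bij_betwE)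

lemma tree_aut_inj_on: "tree_aut d \<phi> \<Longrightarrow> inj_on \<phi> (tree_vertices d)"
  unfolding tree_aut_def bij_betw_def by auto

lemma tree_aut_id: "tree_aut d id"
  unfolding tree_aut_def by auto

lemma tree_aut_comp: "tree_aut d \<phi> \<Longrightarrow> tree_aut d \<psi> \<Longrightarrow> tree_aut d (\<phi> \<circ> \<psi>)"
  unfolding tree_aut_def by (auto intro: bij_betw_trans dest: bij_betwE)

lemma tree_aut_involutionI:
  assumes "\<And>w. w \<in> tree_vertices d \<Longrightarrow> \<phi> w \<in> tree_vertices d"
    and "\<And>w. w \<in> tree_vertices d \<Longrightarrow> \<phi> (\<phi> w) = w"
    and "\<And>w a. w @ [a] \<in> tree_vertices d \<Longrightarrow> tree_adj d (\<phi> w) (\<phi> (w @ [a]))"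
  shows "tree_aut d \<phi>"
proof -
  have adj: "tree_adj d (\<phi> u) (\<phi> v)" if "tree_adj d u v" for u v
    using that assms(3) tree_adj_sym by (auto simp: tree_adj_def)
  show ?thesis
    unfolding tree_aut_def
  proof (intro conjI ballI iffI)
    show "bij_betw \<phi> (tree_vertices d) (tree_vertices d)"
      by (rule bij_betw_byWitness[where f' = \<phi>]) (use assms in auto)
  next
    fix u v assume "u \<in> tree_vertices d" "v \<in> tree_vertices d" "tree_adj d (\<phi> u) (\<phi> v)"
    then show "tree_adj d u v" using adj[of "\<phi> u" "\<phi> v"] assms(2) by simp
  qed (rule adj)
qed

lemma tree_aut_nbrs:
  assumes "tree_aut d \<phi>" "u \<in> tree_vertices d"
  shows "tree_nbrs d (\<phi> u) = \<phi> ` tree_nbrs d u"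
proof
  show "\<phi> ` tree_nbrs d u \<subseteq> tree_nbrs d (\<phi> u)"
    using assms tree_nbrs_in_vertices[of _ d u] unfolding tree_aut_def tree_nbrs_def by auto
next
  show "tree_nbrs d (\<phi> u) \<subseteq> \<phi> ` tree_nbrs d u"
  proof
    fix w assume w: "w \<in> tree_nbrs d (\<phi> u)"
    then have "w \<in> \<phi> ` tree_vertices d"
      using tree_nbrs_in_vertices assms(1) unfolding tree_aut_def bij_betw_def by blast
    then obtain v where v: "v \<in> tree_vertices d" "w = \<phi> v" by blast
    then have "tree_adj d u v" using w assms unfolding tree_aut_def tree_nbrs_def by auto
    then show "w \<in> \<phi> ` tree_nbrs d u" using v by (auto simp: tree_nbrs_def)
  qed
qed

text \<open>Left multiplication by the generator \<open>a\<close> of the free product of copies of \<open>\<int>/2\<close>.\<close>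

definition gen_mult :: "nat \<Rightarrow> nat list \<Rightarrow> nat list" where
  "gen_mult a w = (if w \<noteq> [] \<and> hd w = a then tl w else a # w)"

lemma gen_mult_in_vertices: "a < d \<Longrightarrow> w \<in> tree_vertices d \<Longrightarrow> gen_mult a w \<in> tree_vertices d"
  by (cases w) (auto simp: gen_mult_def Cons_in_tree_vertices)

lemma gen_mult_gen_mult: "w \<in> tree_vertices d \<Longrightarrow> gen_mult a (gen_mult a w) = w"
  by (cases w rule: remdups_adj.cases) (auto simp: gen_mult_def Cons_in_tree_vertices)

lemma tree_aut_gen_mult: "a < d \<Longrightarrow> tree_aut d (gen_mult a)"
proof (rule tree_aut_involutionI)
  fix w b assume "a < d" "w @ [b] \<in> tree_vertices d"
  then show "tree_adj d (gen_mult a w) (gen_mult a (w @ [b]))"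
    using gen_mult_in_vertices[of a d] snoc_in_tree_vertices[of w b d]
    by (cases w) (auto simp: gen_mult_def tree_adj_def Cons_in_tree_vertices)
qed (auto simp: gen_mult_in_vertices gen_mult_gen_mult)

lemma tree_aut_transitive:
  "u \<in> tree_vertices d \<Longrightarrow> \<exists>\<phi>. tree_aut d \<phi> \<and> \<phi> [] = u"
proof (induction u)
  case Nil
  then show ?case using tree_aut_id by (metis id_apply)
next
  case (Cons a u)
  then have a: "a < d" "u \<in> tree_vertices d" "u = [] \<or> a \<noteq> hd u"
    by (auto simp: Cons_in_tree_vertices)
  then obtain \<phi> where "tree_aut d \<phi>" "\<phi> [] = u" using Cons.IH by blast
  then have "tree_aut d (gen_mult a \<circ> \<phi>)" "(gen_mult a \<circ> \<phi>) [] = a # u"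
    using tree_aut_comp tree_aut_gen_mult a by (auto simp: gen_mult_def)
  then show ?case by blast
qed

definition swap_branches :: "nat list \<Rightarrow> nat \<Rightarrow> nat \<Rightarrow> nat list \<Rightarrow> nat list" where
  "swap_branches u a b w =
    (if prefix (u @ [a]) w \<or> prefix (u @ [b]) w
     then u @ map (transpose a b) (drop (length u) w) else w)"

lemma swap_branches_outside:
  "\<not> prefix (u @ [a]) w \<Longrightarrow> \<not> prefix (u @ [b]) w \<Longrightarrow> swap_branches u a b w = w"
  by (simp add: swap_branches_def)

lemma swap_branches_below:
  "c \<in> {a, b} \<Longrightarrow>
    swap_branches u a b (u @ c # r) = u @ transpose a b c # map (transpose a b) r"
  by (auto simp: swap_branches_def)

lemma swap_branches_child: "swap_branches u a b (u @ [a]) = u @ [b]"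
  using swap_branches_below[of a a b u "[]"] by simp

lemma prefix_snoc_obtain:
  assumes "prefix (u @ [c]) w"
  obtains r where "w = u @ c # r"
  using assms by (auto simp: prefix_def)

context
  fixes d u a b
  assumes ua: "u @ [a] \<in> tree_vertices d" and ub: "u @ [b] \<in> tree_vertices d"
begin

lemma swap_branches_in_vertices:
  assumes w: "w \<in> tree_vertices d"
  shows "swap_branches u a b w \<in> tree_vertices d"
proof (cases "prefix (u @ [a]) w \<or> prefix (u @ [b]) w")
  case True
  then obtain c r where c: "c \<in> {a, b}" and wcr: "w = u @ c # r"
    by (auto elim: prefix_snoc_obtain)
  have abd: "a < d" "b < d" using ua ub by (auto simp: snoc_in_tree_vertices)
  then have trd: "x < d \<Longrightarrow> transpose a b x < d" for x by (auto simp: Transposition.transpose_def)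
  have cr: "c # r \<in> tree_vertices d" and u: "u \<in> tree_vertices d"
    using w wcr by (auto simp: append_in_tree_vertices)
  then have r: "r \<in> tree_vertices d" "r = [] \<or> c \<noteq> hd r" by (auto simp: Cons_in_tree_vertices)
  then have "map (transpose a b) r \<in> tree_vertices d"
    using trd inj_transpose[of a b] by (auto simp: tree_vertices_iff successively_map inj_eq)
  then have "transpose a b c # map (transpose a b) r \<in> tree_vertices d"
    using r(2) trd c abd inj_transpose[of a b] by (cases r) (auto simp: Cons_in_tree_vertices inj_eq)
  moreover have "u = [] \<or> last u \<noteq> transpose a b c"
    using ua ub c by (auto simp: snoc_in_tree_vertices Transposition.transpose_def)
  ultimately show ?thesis
    using u wcr swap_branches_below[OF c] by (auto simp: append_in_tree_vertices)
qed (use w in \<open>simp add: swap_branches_def\<close>)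

lemma swap_branches_swap_branches: "swap_branches u a b (swap_branches u a b w) = w"
proof (cases "prefix (u @ [a]) w \<or> prefix (u @ [b]) w")
  case True
  then obtain c r where c: "c \<in> {a, b}" and "w = u @ c # r"
    by (auto elim: prefix_snoc_obtain)
  moreover have "transpose a b c \<in> {a, b}" using c by auto
  ultimately show ?thesis
    using swap_branches_below[OF c] swap_branches_below[of "transpose a b c" a b u]
    by (simp add: comp_def)
qed (simp add: swap_branches_def)

lemma swap_branches_adj_snoc:
  assumes wx: "w @ [x] \<in> tree_vertices d"
  shows "tree_adj d (swap_branches u a b w) (swap_branches u a b (w @ [x]))"
proof -
  have w: "w \<in> tree_vertices d" using wx by (simp add: snoc_in_tree_vertices)
  have V: "swap_branches u a b w \<in> tree_vertices d" "swap_branches u a b (w @ [x]) \<in> tree_vertices d"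
    using swap_branches_in_vertices w wx by auto
  consider (inside) "prefix (u @ [a]) w \<or> prefix (u @ [b]) w"
    | (root) c where "c \<in> {a, b}" "w = u" "x = c"
    | (outside) "\<not> (prefix (u @ [a]) (w @ [x]) \<or> prefix (u @ [b]) (w @ [x]))"
    by (auto simp: prefix_snoc)
  then show ?thesis
  proof cases
    case inside
    then obtain c r where c: "c \<in> {a, b}" and "w = u @ c # r"
      by (auto elim: prefix_snoc_obtain)
    then have "swap_branches u a b (w @ [x]) = swap_branches u a b w @ [transpose a b x]"
      using swap_branches_below[OF c, of u] swap_branches_below[OF c, of u "r @ [x]"] by simp
    then show ?thesis using V by (auto simp: tree_adj_def)
  next
    case root
    then have "swap_branches u a b w = u" "swap_branches u a b (w @ [x]) = u @ [transpose a b c]"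
      using swap_branches_below[OF root(1), of u "[]"] by (auto simp: swap_branches_def)
    then show ?thesis using V by (auto simp: tree_adj_def)
  next
    case outside
    then have "swap_branches u a b w = w" "swap_branches u a b (w @ [x]) = w @ [x]"
      by (auto simp: prefix_snoc swap_branches_def)
    then show ?thesis using w wx by (auto simp: tree_adj_def)
  qed
qed

lemma tree_aut_swap_branches: "tree_aut d (swap_branches u a b)"
  by (rule tree_aut_involutionI)
    (auto simp: swap_branches_in_vertices swap_branches_swap_branches swap_branches_adj_snoc)

end

section \<open>Cubes and linear functionals on \<open>\<real>\<^sup>S\<close>\<close>

definition cube :: "nat list set \<Rightarrow> (nat list \<Rightarrow> real) \<Rightarrow> real \<Rightarrow> (nat list \<Rightarrow> real) set" where
  "cube S q \<epsilon> = {y. (\<forall>u. u \<notin> S \<longrightarrow> y u = 0) \<and> (\<forall>u\<in>S. \<bar>y u - q u\<bar> < \<epsilon>)}"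

lemma marginal_support_iff:
  "x \<in> marginal_support M X S \<longleftrightarrow>
    (\<forall>u. u \<notin> S \<longrightarrow> x u = 0) \<and> (\<forall>\<epsilon>>0. marginal M X S (cube S x \<epsilon>) > 0)"
  by (simp add: marginal_support_def cube_def)

lemma countable_rational_points:
  assumes "finite S"
  shows "countable {q :: nat list \<Rightarrow> real. (\<forall>u. u \<notin> S \<longrightarrow> q u = 0) \<and> (\<forall>u\<in>S. q u \<in> \<rat>)}"
proof -
  have "{q :: nat list \<Rightarrow> real. (\<forall>u. u \<notin> S \<longrightarrow> q u = 0) \<and> (\<forall>u\<in>S. q u \<in> \<rat>)} \<subseteq>
      (\<lambda>p u. if u \<in> S then p u else 0) ` (PiE S (\<lambda>_. \<rat>))"
  proof
    fix q :: "nat list \<Rightarrow> real"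
    assume q: "q \<in> {q. (\<forall>u. u \<notin> S \<longrightarrow> q u = 0) \<and> (\<forall>u\<in>S. q u \<in> \<rat>)}"
    then have "q = (\<lambda>u. if u \<in> S then restrict q S u else 0)" by (auto simp: fun_eq_iff)
    moreover have "restrict q S \<in> PiE S (\<lambda>_. \<rat>)" using q by auto
    ultimately show "q \<in> (\<lambda>p u. if u \<in> S then p u else 0) ` (PiE S (\<lambda>_. \<rat>))" by blast
  qed
  then show ?thesis
    by (rule countable_subset) (intro countable_image countable_PiE assms countable_rat)
qed

lemma rational_cube_approx:
  assumes x: "\<And>u. u \<notin> S \<Longrightarrow> x u = 0" and \<epsilon>: "\<epsilon> > 0"
  obtains q n where "\<And>u. u \<notin> S \<Longrightarrow> q u = 0" "\<And>u. u \<in> S \<Longrightarrow> q u \<in> \<rat>"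
    "x \<in> cube S q (1 / real (Suc n))" "cube S q (1 / real (Suc n)) \<subseteq> cube S x \<epsilon>"
proof -
  obtain n where n: "inverse (real (Suc n)) < \<epsilon> / 2"
    using reals_Archimedean[of "\<epsilon> / 2"] \<epsilon> by auto
  define \<delta> where "\<delta> = 1 / real (Suc n)"
  have \<delta>: "\<delta> > 0" "2 * \<delta> < \<epsilon>"
    using n unfolding \<delta>_def by (auto simp: field_simps)
  have "\<exists>r\<in>\<rat>. x u - \<delta> < r \<and> r < x u" for u
    using Rats_dense_in_real[of "x u - \<delta>" "x u"] \<delta> by auto
  then obtain r where r: "\<And>u. r u \<in> \<rat>" "\<And>u. \<bar>x u - r u\<bar> < \<delta>"
    by (metis abs_diff_less_iff diff_less_eq less_trans add.commute)
  define q where "q u = (if u \<in> S then r u else 0)" for u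
  have "x \<in> cube S q \<delta>"
    using x r(2) by (auto simp: cube_def q_def abs_minus_commute)
  moreover have "cube S q \<delta> \<subseteq> cube S x \<epsilon>"
  proof
    fix y assume y: "y \<in> cube S q \<delta>"
    have "\<bar>y u - x u\<bar> < \<epsilon>" if "u \<in> S" for u
    proof -
      have "\<bar>y u - r u\<bar> < \<delta>" using y that by (simp add: cube_def q_def)
      then show ?thesis using r(2)[of u] \<delta> by (simp add: abs_diff_less_iff)
    qed
    then show "y \<in> cube S x \<epsilon>" using y by (simp add: cube_def)
  qed
  ultimately show ?thesis
    using that[of q n] r(1) by (auto simp: q_def \<delta>_def)
qed

lemma eigen_defect_on_cube:
  fixes x y :: "nat list \<Rightarrow> real"
  assumes "u \<in> S" "tree_nbrs d u \<subseteq> S" "y \<in> cube S x \<epsilon>"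
  shows "\<bar>(l * y u - (\<Sum>w\<in>tree_nbrs d u. y w)) - (l * x u - (\<Sum>w\<in>tree_nbrs d u. x w))\<bar>
    \<le> (\<bar>l\<bar> + real (card (tree_nbrs d u))) * \<epsilon>"
proof -
  have close: "\<bar>y v - x v\<bar> \<le> \<epsilon>" if "v \<in> S" for v
    using assms(3) that by (auto simp: cube_def less_imp_le)
  have "(l * y u - (\<Sum>w\<in>tree_nbrs d u. y w)) - (l * x u - (\<Sum>w\<in>tree_nbrs d u. x w))
      = l * (y u - x u) - (\<Sum>w\<in>tree_nbrs d u. y w - x w)"
    by (simp add: sum_subtractf algebra_simps)
  also have "\<bar>\<dots>\<bar> \<le> \<bar>l\<bar> * \<bar>y u - x u\<bar> + \<bar>\<Sum>w\<in>tree_nbrs d u. y w - x w\<bar>"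
    using abs_triangle_ineq4[of "l * (y u - x u)"] by (simp add: abs_mult)
  also have "\<dots> \<le> \<bar>l\<bar> * \<epsilon> + (\<Sum>w\<in>tree_nbrs d u. \<epsilon>)"
  proof (rule add_mono)
    show "\<bar>l\<bar> * \<bar>y u - x u\<bar> \<le> \<bar>l\<bar> * \<epsilon>"
      using close assms(1) by (intro mult_left_mono) auto
    have "\<bar>\<Sum>w\<in>tree_nbrs d u. y w - x w\<bar> \<le> (\<Sum>w\<in>tree_nbrs d u. \<bar>y w - x w\<bar>)"
      by (rule sum_abs)
    also have "\<dots> \<le> (\<Sum>w\<in>tree_nbrs d u. \<epsilon>)"
      using close assms(2) by (intro sum_mono) auto
    finally show "\<bar>\<Sum>w\<in>tree_nbrs d u. y w - x w\<bar> \<le> (\<Sum>w\<in>tree_nbrs d u. \<epsilon>)" .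
  qed
  finally show ?thesis by (simp add: algebra_simps)
qed

interpretation fun_vs: vector_space "\<lambda>(c::real) (f::nat list \<Rightarrow> real) u. c * f u"
  by unfold_locales (auto simp: fun_eq_iff algebra_simps)

interpretation real_vs: vector_space "(*) :: real \<Rightarrow> real \<Rightarrow> real"
  by unfold_locales (auto simp: algebra_simps)

interpretation fun_real_vs: vector_space_pair "\<lambda>(c::real) (f::nat list \<Rightarrow> real) u. c * f u"
  "(*) :: real \<Rightarrow> real \<Rightarrow> real" ..

lemma sum_fun_apply: "(\<Sum>i\<in>A. f i) x = (\<Sum>i\<in>A. f i x)"
  by (induction A rule: infinite_finite_induct) auto

lemma linear_functional_coordinates:
  fixes g :: "(nat list \<Rightarrow> real) \<Rightarrow> real"
  assumes g: "Vector_Spaces.linear (\<lambda>c f u. c * f u) (*) g"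
    and S: "finite S" and x: "\<And>u. u \<notin> S \<Longrightarrow> x u = 0"
  shows "g x = (\<Sum>u\<in>S. g (\<lambda>v. if v = u then 1 else 0) * x u)"
proof -
  interpret g: Vector_Spaces.linear "\<lambda>(c::real) (f::nat list \<Rightarrow> real) u. c * f u" "(*)" g
    by (rule g)
  define \<delta> where "\<delta> u = (\<lambda>v. if v = u then 1 else (0::real))" for u :: "nat list"
  have "x = (\<Sum>u\<in>S. (\<lambda>v. x u * \<delta> u v))"
  proof
    fix v
    have "(\<Sum>u\<in>S. (\<lambda>v. x u * \<delta> u v)) v = (\<Sum>u\<in>S. if v = u then x u else 0)"
      unfolding sum_fun_apply by (rule sum.cong) (auto simp: \<delta>_def)
    also have "\<dots> = x v" using S x by (cases "v \<in> S") auto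
    finally show "x v = (\<Sum>u\<in>S. (\<lambda>v. x u * \<delta> u v)) v" by simp
  qed
  then have "g x = (\<Sum>u\<in>S. g (\<lambda>v. x u * \<delta> u v))"
    by (metis g.sum)
  also have "\<dots> = (\<Sum>u\<in>S. x u * g (\<delta> u))"
    using g.scale by (intro sum.cong) auto
  finally show ?thesis by (simp add: \<delta>_def mult.commute)
qed

lemma separating_functional:
  fixes A :: "(nat list \<Rightarrow> real) set" and f :: "nat list \<Rightarrow> real"
  assumes S: "finite S" and A: "\<And>x u. x \<in> A \<Longrightarrow> u \<notin> S \<Longrightarrow> x u = 0"
    and f: "\<And>u. u \<notin> S \<Longrightarrow> f u = 0" "f \<notin> fun_span A"
  obtains c where "\<And>x. x \<in> A \<Longrightarrow> (\<Sum>u\<in>S. c u * x u) = 0" "(\<Sum>u\<in>S. c u * f u) \<noteq> 0"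
proof -
  obtain B where B: "B \<subseteq> A" "fun_vs.independent B" "A \<subseteq> fun_vs.span B"
    using fun_vs.maximal_independent_subset[of A] by blast
  have fB: "f \<notin> fun_vs.span B"
    using fun_vs.span_mono[OF B(1)] f(2) by (auto simp: fun_span_def)
  then have "f \<notin> B" using fun_vs.span_superset by blast
  obtain g where g: "Vector_Spaces.linear (\<lambda>c f u. c * f u) (*) g"
    "\<forall>x\<in>insert f B. g x = (if x = f then 1 else 0)"
    using fun_real_vs.linear_independent_extend[OF fun_vs.independent_insertI[OF fB B(2)],
        where f = "\<lambda>x. if x = f then 1 else 0"]
    by blast
  have gB: "g b = 0" if "b \<in> B" for b
    using g(2) that \<open>f \<notin> B\<close> by auto
  have g0: "g x = 0" if "x \<in> A" for x
  proof -
    have "g x = (\<lambda>_. 0) x"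
      by (rule fun_real_vs.linear_eq_on[OF g(1) fun_real_vs.linear_zero, of _ B])
        (use that B(3) gB in auto)
    then show ?thesis by simp
  qed
  let ?c = "\<lambda>u. g (\<lambda>v. if v = u then 1 else 0)"
  show ?thesis
  proof (rule that[of ?c])
    fix x assume "x \<in> A"
    then show "(\<Sum>u\<in>S. ?c u * x u) = 0"
      using linear_functional_coordinates[OF g(1) S, of x] A g0 by simp
  next
    show "(\<Sum>u\<in>S. ?c u * f u) \<noteq> 0"
      using linear_functional_coordinates[OF g(1) S, of f] f(1) g(2) by simp
  qed
qed

lemma W_space_eigen_equation:
  "f \<in> W_space d l S \<Longrightarrow> u \<in> S \<Longrightarrow> tree_ball d 1 {u} \<subseteq> S \<Longrightarrow>
    l * f u = (\<Sum>w\<in>tree_nbrs d u. f w)"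
  unfolding W_space_def by blast

lemma W_space_subspace: "fun_vs.subspace (W_space d l S)"
  unfolding fun_vs.subspace_def W_space_def
  by (auto simp: sum.distrib sum_distrib_left algebra_simps)

section \<open>Covariances of an eigenvector process\<close>

locale tree_eigen_process =
  fixes d :: nat and l :: real and M :: "'a measure" and X :: "nat list \<Rightarrow> 'a \<Rightarrow> real"
  assumes eigenvector_process: "eigenvector_process d l M X"
begin

abbreviation "V \<equiv> tree_vertices d"
abbreviation "PV \<equiv> PiM (tree_vertices d) (\<lambda>_. borel :: real measure)"

sublocale prob_space M
  using eigenvector_process by (simp add: eigenvector_process_def)

lemma X_measurable [measurable]: "u \<in> V \<Longrightarrow> X u \<in> borel_measurable M"
  using eigenvector_process by (simp add: eigenvector_process_def)

lemma integrable_X_square: "u \<in> V \<Longrightarrow> integrable M (\<lambda>\<omega>. (X u \<omega>)\<^sup>2)"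
  using eigenvector_process by (simp add: eigenvector_process_def)

lemma variance_X: "u \<in> V \<Longrightarrow> variance (X u) = 1"
  using eigenvector_process by (simp add: eigenvector_process_def)

lemma integrable_X: "u \<in> V \<Longrightarrow> integrable M (X u)"
  using square_integrable_imp_integrable[OF X_measurable integrable_X_square] by simp

lemma integrable_X_mult:
  assumes "u \<in> V" "v \<in> V"
  shows "integrable M (\<lambda>\<omega>. X u \<omega> * X v \<omega>)"
proof (rule Bochner_Integration.integrable_bound)
  show "integrable M (\<lambda>\<omega>. (X u \<omega>)\<^sup>2 + (X v \<omega>)\<^sup>2)"
    using integrable_X_square assms by auto
  have "\<bar>x * y\<bar> \<le> x\<^sup>2 + y\<^sup>2" for x y :: real
  proof -
    have "2 * (\<bar>x\<bar> * \<bar>y\<bar>) \<le> x\<^sup>2 + y\<^sup>2"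
      using zero_le_power2[of "\<bar>x\<bar> - \<bar>y\<bar>"] by (simp add: power2_diff)
    moreover have "0 \<le> \<bar>x\<bar> * \<bar>y\<bar>" by simp
    ultimately show ?thesis unfolding abs_mult by linarith
  qed
  then show "AE \<omega> in M. norm (X u \<omega> * X v \<omega>) \<le> norm ((X u \<omega>)\<^sup>2 + (X v \<omega>)\<^sup>2)"
    by simp
qed (use assms in measurable)

definition shifted :: "(nat list \<Rightarrow> nat list) \<Rightarrow> 'a \<Rightarrow> nat list \<Rightarrow> real" where
  "shifted \<phi> \<omega> = (\<lambda>u\<in>V. X (\<phi> u) \<omega>)"

lemma shifted_measurable: "tree_aut d \<phi> \<Longrightarrow> shifted \<phi> \<in> measurable M PV"
  unfolding shifted_def by (rule measurable_restrict) (auto intro: tree_aut_in_vertices X_measurable)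

lemma distr_shifted: "tree_aut d \<phi> \<Longrightarrow> distr M PV (shifted \<phi>) = distr M PV (shifted id)"
  using eigenvector_process unfolding eigenvector_process_def shifted_def by simp

lemma integral_shifted:
  fixes g :: "(nat list \<Rightarrow> real) \<Rightarrow> real"
  assumes "tree_aut d \<phi>" "g \<in> borel_measurable PV"
  shows "(\<integral>\<omega>. g (shifted \<phi> \<omega>) \<partial>M) = (\<integral>\<omega>. g (shifted id \<omega>) \<partial>M)"
proof -
  have "(\<integral>\<omega>. g (shifted \<phi> \<omega>) \<partial>M) = integral\<^sup>L (distr M PV (shifted \<phi>)) g"
    by (rule integral_distr[of "shifted \<phi>" M PV g, symmetric]) (use assms shifted_measurable in auto)
  also have "\<dots> = integral\<^sup>L (distr M PV (shifted id)) g"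
    using distr_shifted[OF assms(1)] by simp
  also have "\<dots> = (\<integral>\<omega>. g (shifted id \<omega>) \<partial>M)"
    by (rule integral_distr[of "shifted id" M PV g]) (use assms shifted_measurable tree_aut_id in auto)
  finally show ?thesis .
qed

lemma AE_shifted:
  assumes "tree_aut d \<phi>" "{x \<in> space PV. Q x} \<in> sets PV" "AE \<omega> in M. Q (shifted id \<omega>)"
  shows "AE \<omega> in M. Q (shifted \<phi> \<omega>)"
proof -
  have "AE x in distr M PV (shifted id). Q x"
    using assms(3) by (subst AE_distr_iff[OF shifted_measurable[OF tree_aut_id] assms(2)])
  then have "AE x in distr M PV (shifted \<phi>). Q x"
    by (subst distr_shifted[OF assms(1)])
  then show ?thesis
    by (subst (asm) AE_distr_iff[OF shifted_measurable[OF assms(1)] assms(2)])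
qed

text \<open>Uncentred.\<close>

definition cov :: "nat list \<Rightarrow> nat list \<Rightarrow> real" where
  "cov u v = (\<integral>\<omega>. X u \<omega> * X v \<omega> \<partial>M)"

lemma cov_sym: "cov u v = cov v u"
  by (simp add: cov_def mult.commute)

lemma cov_aut_invariant:
  assumes "tree_aut d \<phi>" "u \<in> V" "v \<in> V"
  shows "cov (\<phi> u) (\<phi> v) = cov u v"
  using integral_shifted[OF assms(1), of "\<lambda>x. x u * x v"] assms(2,3)
  by (simp add: shifted_def cov_def)

lemma eigen_equation_AE:
  assumes u: "u \<in> V"
  shows "AE \<omega> in M. (\<Sum>w\<in>tree_nbrs d u. X w \<omega>) = l * X u \<omega>"
proof -
  obtain \<phi> where \<phi>: "tree_aut d \<phi>" "\<phi> [] = u" using tree_aut_transitive[OF u] by blast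
  define Q where "Q x = ((\<Sum>w\<in>tree_nbrs d []. x w) = l * (x [] :: real))" for x :: "nat list \<Rightarrow> real"
  have NV: "tree_nbrs d [] \<subseteq> V" using tree_nbrs_in_vertices by blast
  have "{x \<in> space PV. Q x} \<in> sets PV"
    unfolding Q_def
  proof (rule measurable_equality_set)
    show "(\<lambda>x. \<Sum>w\<in>tree_nbrs d []. x w) \<in> borel_measurable PV"
      using NV by (intro borel_measurable_sum) (auto intro: measurable_component_singleton)
  qed measurable
  moreover have "AE \<omega> in M. Q (shifted id \<omega>)"
    using eigenvector_process NV
    by (auto simp: eigenvector_process_def tree_root_def Q_def shifted_def subset_iff)
  ultimately have "AE \<omega> in M. Q (shifted \<phi> \<omega>)" using AE_shifted[OF \<phi>(1)] by blast
  moreover have "(\<Sum>w\<in>tree_nbrs d u. X w \<omega>) = (\<Sum>w\<in>tree_nbrs d []. X (\<phi> w) \<omega>)" for \<omega>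
    using tree_aut_nbrs[OF \<phi>(1), of "[]"] \<phi>(2) tree_aut_inj_on[OF \<phi>(1)] NV
    by (simp add: sum.reindex inj_on_subset)
  ultimately show ?thesis
    using NV \<phi>(2) by (simp add: Q_def shifted_def subset_iff)
qed

lemma cov_eigen_equation:
  assumes u: "u \<in> V" and v: "v \<in> V"
  shows "(\<Sum>w\<in>tree_nbrs d u. cov w v) = l * cov u v"
proof -
  have NV: "tree_nbrs d u \<subseteq> V" using tree_nbrs_in_vertices by blast
  then have [measurable]: "(\<lambda>\<omega>. \<Sum>w\<in>tree_nbrs d u. X w \<omega>) \<in> borel_measurable M"
    by (auto intro!: borel_measurable_sum)
  have "(\<Sum>w\<in>tree_nbrs d u. cov w v) = (\<integral>\<omega>. (\<Sum>w\<in>tree_nbrs d u. X w \<omega>) * X v \<omega> \<partial>M)"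
    unfolding cov_def sum_distrib_right
    by (rule Bochner_Integration.integral_sum[symmetric]) (use NV v integrable_X_mult in auto)
  also have "\<dots> = (\<integral>\<omega>. l * (X u \<omega> * X v \<omega>) \<partial>M)"
    by (rule integral_cong_AE) (use eigen_equation_AE[OF u] u v in auto)
  finally show ?thesis by (simp add: cov_def)
qed

lemma cov_diag_ge_1:
  assumes "u \<in> V"
  shows "cov u u \<ge> 1"
proof -
  have "cov u u = 1 + (expectation (X u))\<^sup>2"
    using variance_eq[OF integrable_X integrable_X_square, OF assms assms] variance_X[OF assms]
    by (simp add: cov_def power2_eq_square)
  then show ?thesis by simp
qed

lemma cov_diag:
  assumes "u \<in> V"
  shows "cov u u = cov [] []"
proof -
  obtain \<phi> where "tree_aut d \<phi>" "\<phi> [] = u" using tree_aut_transitive[OF assms] by blast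
  then show ?thesis using cov_aut_invariant[of \<phi> "[]" "[]"] by simp
qed

lemma cov_root_child:
  assumes "a < d"
  shows "cov [] [a] = cov [] [0]"
proof -
  have "swap_branches [] 0 a [] = []" "swap_branches [] 0 a [0] = [a]"
    using swap_branches_child[of "[]" 0 a] by (simp_all add: swap_branches_def)
  moreover have "tree_aut d (swap_branches [] 0 a)"
    using assms by (intro tree_aut_swap_branches) auto
  ultimately show ?thesis using cov_aut_invariant[of _ "[]" "[0]"] assms by fastforce
qed

lemma cov_root_child_eq: "real d * cov [] [0] = l * cov [] []"
proof -
  have "l * cov [] [] = (\<Sum>a<d. cov [a] [])"
    using cov_eigen_equation[of "[]" "[]"] by (simp add: sum_tree_nbrs_root)
  also have "\<dots> = (\<Sum>a<d. cov [] [0])"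
  proof (rule sum.cong)
    fix a assume "a \<in> {..<d}"
    then show "cov [a] [] = cov [] [0]" by (metis cov_sym cov_root_child lessThan_iff)
  qed simp
  finally show ?thesis by simp
qed

lemma cov_swap_branches:
  assumes "u @ [a] \<in> V" "u @ [b] \<in> V" "z \<in> V"
    and "\<not> prefix (u @ [a]) z" "\<not> prefix (u @ [b]) z"
  shows "cov z (u @ [a]) = cov z (u @ [b])"
  using cov_aut_invariant[OF tree_aut_swap_branches[OF assms(1,2)] assms(3,1)]
  by (simp add: swap_branches_outside[OF assms(4,5)] swap_branches_child)

lemma cov_children_of_vertex:
  assumes u: "u \<in> V" and z: "z \<in> V" and v: "v \<in> children d e u" "v' \<in> children d e u"
    and "\<not> prefix v z" "\<not> prefix v' z"
  shows "cov z v = cov z v'"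
proof -
  obtain a b where "v = u @ [a]" "v' = u @ [b]"
    using child_eq_snoc[OF u v(1)] child_eq_snoc[OF u v(2)] by metis
  then show ?thesis
    using cov_swap_branches[of u a b z] children_in_vertices[OF v(1)] children_in_vertices[OF v(2)]
      z assms(5,6) by simp
qed

lemma sum_cov_eq_0_if_AE:
  assumes A: "finite A" "A \<subseteq> V" and v: "v \<in> V"
    and AE: "AE \<omega> in M. (\<Sum>x\<in>A. c x * X x \<omega>) = 0"
  shows "(\<Sum>x\<in>A. c x * cov x v) = 0"
proof -
  have [measurable]: "(\<lambda>\<omega>. \<Sum>x\<in>A. c x * X x \<omega>) \<in> borel_measurable M"
    using A(2) by (auto intro!: borel_measurable_sum borel_measurable_times X_measurable)
  have int: "integrable M (\<lambda>\<omega>. c x * (X x \<omega> * X v \<omega>))" if "x \<in> A" for x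
    using integrable_X_mult[of x v] A(2) v that by auto
  have "(\<Sum>x\<in>A. c x * cov x v) = (\<integral>\<omega>. (\<Sum>x\<in>A. c x * X x \<omega>) * X v \<omega> \<partial>M)"
    unfolding cov_def sum_distrib_right mult.assoc
    by (subst Bochner_Integration.integral_sum[OF int]) auto
  also have "\<dots> = (\<integral>\<omega>. 0 \<partial>M)"
    using AE by (intro integral_cong_AE) (use A v in auto)
  finally show ?thesis by simp
qed

definition process_on :: "nat list set \<Rightarrow> 'a \<Rightarrow> nat list \<Rightarrow> real" where
  "process_on S \<omega> = (\<lambda>u. if u \<in> S then X u \<omega> else 0)"

lemma marginal_eq_prob: "marginal M X S A = \<P>(\<omega> in M. process_on S \<omega> \<in> A)"
  by (simp add: marginal_def process_on_def)

lemma process_on_cube_event: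
  assumes "finite S" "S \<subseteq> V"
  shows "{\<omega> \<in> space M. process_on S \<omega> \<in> cube S q \<epsilon>} \<in> events"
proof -
  have "{\<omega> \<in> space M. process_on S \<omega> \<in> cube S q \<epsilon>} = {\<omega> \<in> space M. \<forall>u\<in>S. \<bar>X u \<omega> - q u\<bar> < \<epsilon>}"
    by (auto simp: process_on_def cube_def)
  also have "\<dots> \<in> events"
    using assms by (intro pred_intros_finite(3)[unfolded pred_def]) (auto intro: X_measurable)
  finally show ?thesis .
qed

lemma AE_process_on_in_marginal_support:
  assumes fS: "finite S" and SV: "S \<subseteq> V"
  shows "AE \<omega> in M. process_on S \<omega> \<in> marginal_support M X S"
proof -
  let ?Q = "{q :: nat list \<Rightarrow> real. (\<forall>u. u \<notin> S \<longrightarrow> q u = 0) \<and> (\<forall>u\<in>S. q u \<in> \<rat>)}"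
  let ?cube = "\<lambda>(q, n). cube S q (1 / real (Suc n))"
  define N where "N = {p \<in> ?Q \<times> UNIV. marginal M X S (?cube p) = 0}"
  have "countable N"
    unfolding N_def using countable_rational_points[OF fS]
    by (intro countable_subset[OF _ countable_SIGMA]) auto
  moreover have "AE \<omega> in M. process_on S \<omega> \<notin> ?cube p" if "p \<in> N" for p
    using that prob_eq_0[OF process_on_cube_event[OF fS SV]]
    by (auto simp: N_def marginal_eq_prob)
  ultimately have "AE \<omega> in M. \<forall>p\<in>N. process_on S \<omega> \<notin> ?cube p"
    by (simp add: AE_ball_countable)
  then show ?thesis
  proof eventually_elim
    case (elim \<omega>)
    have "marginal M X S (cube S (process_on S \<omega>) \<epsilon>) > 0" if "\<epsilon> > 0" for \<epsilon>
    proof -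
      have "process_on S \<omega> u = 0" if "u \<notin> S" for u
        using that by (simp add: process_on_def)
      then obtain q n where q: "\<And>u. u \<notin> S \<Longrightarrow> q u = 0" "\<And>u. u \<in> S \<Longrightarrow> q u \<in> \<rat>"
        and in_cube: "process_on S \<omega> \<in> ?cube (q, n)"
        and sub: "?cube (q, n) \<subseteq> cube S (process_on S \<omega>) \<epsilon>"
        using \<open>\<epsilon> > 0\<close> by (rule rational_cube_approx) auto
      have "marginal M X S (?cube (q, n)) \<noteq> 0"
        using elim q in_cube by (auto simp: N_def)
      moreover have "marginal M X S (?cube (q, n)) \<le> marginal M X S (cube S (process_on S \<omega>) \<epsilon>)"
        unfolding marginal_eq_prob
        using sub process_on_cube_event[OF fS SV] by (intro finite_measure_mono) auto
      moreover have "marginal M X S (?cube (q, n)) \<ge> 0"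
        by (simp add: marginal_eq_prob)
      ultimately show ?thesis by linarith
    qed
    then show ?case by (simp add: marginal_support_iff process_on_def)
  qed
qed

text \<open>Near a point violating the eigen equation at \<open>u\<close> the process violates it too, which
  happens with probability zero.\<close>

lemma marginal_support_eigen_equation:
  assumes "x \<in> marginal_support M X S" "u \<in> S" "tree_ball d 1 {u} \<subseteq> S" "S \<subseteq> V"
  shows "l * x u = (\<Sum>w\<in>tree_nbrs d u. x w)"
proof (rule ccontr)
  let ?defect = "\<lambda>y. l * y u - (\<Sum>w\<in>tree_nbrs d u. y w)"
  assume "l * x u \<noteq> (\<Sum>w\<in>tree_nbrs d u. x w)"
  then have \<delta>: "\<bar>?defect x\<bar> > 0" by simp
  define C where "C = \<bar>l\<bar> + real (card (tree_nbrs d u)) + 1"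
  define \<epsilon> where "\<epsilon> = \<bar>?defect x\<bar> / C"
  have C: "C > 0" by (simp add: C_def add_nonneg_pos)
  have uV: "u \<in> V" using assms(2,4) by blast
  then have nbrs: "tree_nbrs d u \<subseteq> S" using assms(3) tree_ball_1[OF uV] by blast
  have "AE \<omega> in M. process_on S \<omega> \<notin> cube S x \<epsilon>"
    using eigen_equation_AE[OF uV]
  proof eventually_elim
    case (elim \<omega>)
    have "?defect (process_on S \<omega>) = 0"
      using elim assms(2) nbrs by (auto simp: process_on_def subset_iff cong: sum.cong)
    then have "\<bar>?defect x\<bar> > (\<bar>l\<bar> + real (card (tree_nbrs d u))) * \<epsilon>"
      using \<delta> C by (simp add: \<epsilon>_def C_def field_simps)
    then show ?case
      using eigen_defect_on_cube[OF assms(2) nbrs, of "process_on S \<omega>" x \<epsilon> l]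
        \<open>?defect (process_on S \<omega>) = 0\<close> by auto
  qed
  then have "marginal M X S (cube S x \<epsilon>) = 0"
    unfolding marginal_eq_prob by (rule prob_eq_0_AE)
  moreover have "\<epsilon> > 0" using \<delta> C by (simp add: \<epsilon>_def)
  ultimately show False using assms(1) by (auto simp: marginal_support_iff)
qed

lemma marginal_support_subset_W_space: "S \<subseteq> V \<Longrightarrow> marginal_support M X S \<subseteq> W_space d l S"
  using marginal_support_eigen_equation by (auto simp: W_space_def marginal_support_iff)

end

section \<open>Eigen solutions as combinations of covariances\<close>

locale nondegenerate_tree_eigen_process = tree_eigen_process +
  assumes d_ge_3: "d \<ge> 3" and abs_l_less_d: "\<bar>l\<bar> < real d"
begin

text \<open>The covariances at distance 0, 1 and 2; by invariance every covariance between two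
  vertices at distance at most 2 is one of them.\<close>

abbreviation "cov0 \<equiv> cov [] []"
abbreviation "cov1 \<equiv> cov [] [0]"
abbreviation "cov2 \<equiv> cov [0] [1]"

lemma cov_root_children:
  assumes "a < d" "b < d" "a \<noteq> b"
  shows "cov [a] [b] = cov2"
proof -
  have swap: "cov [a] [b] = cov [a] [c]" if "a < d" "b < d" "c < d" "b \<noteq> a" "c \<noteq> a" for a b c
    using cov_swap_branches[of "[]" b c "[a]"] that by simp
  show ?thesis
  proof (cases "a = 0")
    case True
    then show ?thesis using swap[of 0 b 1] assms d_ge_3 by simp
  next
    case False
    then have "cov [a] [b] = cov [0] [a]"
      using swap[of a b 0] assms by (simp add: cov_sym)
    also have "\<dots> = cov2" using swap[of 0 a 1] assms False d_ge_3 by simp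
    finally show ?thesis .
  qed
qed

lemma cov_children:
  assumes u: "u \<in> V" and w: "w \<in> tree_nbrs d u" "w' \<in> tree_nbrs d u" "w \<noteq> w'"
  shows "cov w w' = cov2"
proof -
  obtain \<phi> where \<phi>: "tree_aut d \<phi>" "\<phi> [] = u" using tree_aut_transitive[OF u] by blast
  then have "tree_nbrs d u = \<phi> ` (\<lambda>a. [a]) ` {..<d}"
    using tree_aut_nbrs[OF \<phi>(1), of "[]"] by (simp add: tree_nbrs_root)
  then obtain a b where ab: "a < d" "b < d" "w = \<phi> [a]" "w' = \<phi> [b]"
    using w(1,2) by auto
  then have "cov w w' = cov [a] [b]" using cov_aut_invariant[OF \<phi>(1)] by simp
  also have "\<dots> = cov2" using ab w(3) by (intro cov_root_children) auto
  finally show ?thesis .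
qed

lemma cov_sibling_eq: "cov0 + (real d - 1) * cov2 = l * cov1"
proof -
  have "l * cov1 = (\<Sum>a<d. cov [a] [0])"
    using cov_eigen_equation[of "[]" "[0]"] d_ge_3 by (simp add: sum_tree_nbrs_root)
  also have "\<dots> = cov [0] [0] + (\<Sum>a\<in>{..<d} - {0}. cov [a] [0])"
    using d_ge_3 by (subst sum.remove[of _ 0]) auto
  also have "\<dots> = cov0 + (\<Sum>a\<in>{..<d} - {0}. cov2)"
  proof -
    have "cov [a] [0] = cov2" if "a \<in> {..<d} - {0}" for a
      using that cov_root_children[of a 0] d_ge_3 by simp
    then show ?thesis using cov_diag[of "[0]"] d_ge_3 by simp
  qed
  finally show ?thesis using d_ge_3 by (simp add: of_nat_diff)
qed

lemma cov0_pos: "cov0 > 0"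
  using cov_diag_ge_1[of "[]"] by simp

lemma abs_cov1_less_cov0: "\<bar>cov1\<bar> < cov0"
proof -
  have "\<bar>cov1\<bar> * real d = \<bar>l\<bar> * cov0"
    using arg_cong[OF cov_root_child_eq, of abs] cov0_pos by (simp add: abs_mult mult.commute)
  also have "\<dots> < real d * cov0"
    using abs_l_less_d cov0_pos by (rule mult_strict_right_mono)
  finally show ?thesis using d_ge_3 by (simp add: mult.commute)
qed

text \<open>From the two eigen equations, \<open>d (d - 1) (cov0 - cov2) = (d\<^sup>2 - l\<^sup>2) cov0\<close>.\<close>

lemma cov2_less_cov0: "cov2 < cov0"
proof -
  have sibling: "(real d - 1) * cov2 = l * cov1 - cov0" using cov_sibling_eq by simp
  have "real d * (real d - 1) * (cov0 - cov2) = real d * (real d - 1) * cov0 - real d * ((real d - 1) * cov2)"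
    by (simp add: algebra_simps)
  also have "\<dots> = real d * (real d - 1) * cov0 - real d * (l * cov1 - cov0)"
    by (simp only: sibling)
  also have "\<dots> = real d * real d * cov0 - l * (real d * cov1)"
    by (simp add: algebra_simps)
  also have "\<dots> = ((real d)\<^sup>2 - l\<^sup>2) * cov0"
    using cov_root_child_eq by (simp add: power2_eq_square algebra_simps)
  finally have eq: "real d * (real d - 1) * (cov0 - cov2) = ((real d)\<^sup>2 - l\<^sup>2) * cov0" .
  have "\<bar>l\<bar> * \<bar>l\<bar> < real d * real d"
    using abs_l_less_d by (intro mult_strict_mono) auto
  then have "0 < ((real d)\<^sup>2 - l\<^sup>2) * cov0"
    using cov0_pos by (simp add: power2_eq_square abs_mult_self_eq)
  moreover have "0 < real d * (real d - 1)" using d_ge_3 by simp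
  ultimately have "0 < cov0 - cov2" using eq zero_less_mult_pos by metis
  then show ?thesis by simp
qed

text \<open>The coefficient of \<open>cov \<cdot> v\<close> in the representation of an eigen solution \<open>f\<close>
  for \<open>v\<close> outside the centre.\<close>

definition sibling_contrast :: "(nat list \<Rightarrow> real) \<Rightarrow> bool \<Rightarrow> nat list \<Rightarrow> real" where
  "sibling_contrast f e v =
    (f v - (\<Sum>w\<in>children d e (butlast v). f w) / real (card (children d e (butlast v))))
      / (cov0 - cov2)"

lemma sum_sibling_contrast:
  assumes u: "u \<in> V"
  shows "(\<Sum>v\<in>children d e u. sibling_contrast f e v) = 0"
proof -
  have "card (children d e u) \<noteq> 0" using children_nonempty[OF u d_ge_3] by simp
  then show ?thesis
    using butlast_child[OF u]
    by (simp add: sibling_contrast_def sum_divide_distrib[symmetric] sum_subtractf cong: sum.cong)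
qed

lemma sum_sibling_contrast_cov_far:
  assumes u: "u \<in> V" and z: "z \<in> V" and far: "\<And>v. v \<in> children d e u \<Longrightarrow> \<not> prefix v z"
  shows "(\<Sum>v\<in>children d e u. sibling_contrast f e v * cov z v) = 0"
proof -
  obtain v0 where v0: "v0 \<in> children d e u" using children_nonempty[OF u d_ge_3] by blast
  have "(\<Sum>v\<in>children d e u. sibling_contrast f e v * cov z v) =
      (\<Sum>v\<in>children d e u. sibling_contrast f e v) * cov z v0"
    unfolding sum_distrib_right
    using cov_children_of_vertex[OF u z _ v0 far far[OF v0]] by (simp cong: sum.cong)
  then show ?thesis using sum_sibling_contrast[OF u] by simp
qed

lemma sum_sibling_contrast_cov_child:
  assumes u: "u \<in> V" and v1: "v1 \<in> children d e u"
  shows "(\<Sum>v\<in>children d e u. sibling_contrast f e v * cov v1 v) =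
    f v1 - (\<Sum>w\<in>children d e u. f w) / real (card (children d e u))"
proof -
  let ?\<beta> = "sibling_contrast f e"
  have "?\<beta> v * cov v1 v = cov2 * ?\<beta> v + (if v = v1 then ?\<beta> v1 * (cov0 - cov2) else 0)"
    if "v \<in> children d e u" for v
    using cov_diag[OF children_in_vertices[OF v1]] cov_children[OF u] that v1
      children_subset_nbrs[of d e u]
    by (auto simp: algebra_simps)
  then have "(\<Sum>v\<in>children d e u. ?\<beta> v * cov v1 v) =
      (\<Sum>v\<in>children d e u. cov2 * ?\<beta> v + (if v = v1 then ?\<beta> v1 * (cov0 - cov2) else 0))"
    by (rule sum.cong[OF refl])
  also have "\<dots> = cov2 * (\<Sum>v\<in>children d e u. ?\<beta> v) + ?\<beta> v1 * (cov0 - cov2)"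
    using v1 by (simp add: sum.distrib sum_distrib_left)
  finally have "(\<Sum>v\<in>children d e u. ?\<beta> v * cov v1 v) = ?\<beta> v1 * (cov0 - cov2)"
    using sum_sibling_contrast[OF u] by simp
  then show ?thesis
    using sum_sibling_contrast[OF u] cov2_less_cov0 butlast_child[OF u v1]
    by (simp add: sibling_contrast_def)
qed

lemma sum_sibling_contrast_cov_other_block:
  assumes u: "u \<in> V" and u': "u' \<in> V" "u' \<noteq> u"
    and v1: "v1 \<in> children d e u" and v2: "v2 \<in> children d e u"
  shows "(\<Sum>v\<in>children d e u'. sibling_contrast f e v * cov v1 v) =
    (\<Sum>v\<in>children d e u'. sibling_contrast f e v * cov v2 v)"
proof -
  have v12: "butlast vi = u" "length vi = Suc (length u)" if "vi \<in> {v1, v2}" for vi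
    using that v1 v2 by (auto elim: child_eq_snoc[OF u])
  have v: "butlast v = u'" "length v = Suc (length u')" "prefix vi v \<longleftrightarrow> vi = v \<or> prefix vi u'"
    if "v \<in> children d e u'" for v vi
    using that by (auto elim: child_eq_snoc[OF u'(1)] simp: prefix_snoc)
  show ?thesis
  proof (cases "prefix v1 u' \<or> prefix v2 u'")
    case True
    then have "Suc (length u) \<le> length u'"
      using v12 prefix_length_le by fastforce
    then have "\<not> prefix v vi" if "v \<in> children d e u'" "vi \<in> {v1, v2}" for v vi
      using v(2)[OF that(1)] v12(2)[OF that(2)] prefix_length_le[of v vi] by linarith
    then show ?thesis
      using sum_sibling_contrast_cov_far[OF u'(1)] children_in_vertices[OF v1]
        children_in_vertices[OF v2]
      by simp
  next
    case False
    have "cov v1 v = cov v2 v" if "v \<in> children d e u'" for v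
    proof -
      have "\<not> prefix vi v" if "vi \<in> {v1, v2}" for vi
        using False u'(2) v12(1)[OF that] v(1)[OF \<open>v \<in> children d e u'\<close>]
          v(3)[OF \<open>v \<in> children d e u'\<close>, of vi] that by auto
      then show ?thesis
        using cov_children_of_vertex[OF u children_in_vertices[OF that] v1 v2] by (simp add: cov_sym)
    qed
    then show ?thesis by simp
  qed
qed

lemma centre_coefficients_exist:
  "\<exists>\<alpha>. \<forall>b\<in>centre d e. (\<Sum>v\<in>centre d e. \<alpha> v * cov b v) = f b"
proof (cases e)
  case False
  then have "centre d e = {[]}" using centre_eq d_ge_3 by simp
  then show ?thesis using cov0_pos by (intro exI[of _ "\<lambda>_. f [] / cov0"]) simp
next
  case True
  then have centre: "centre d e = {[], [0]}" using centre_eq d_ge_3 by simp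
  define D where "D = cov0 * cov0 - cov1 * cov1"
  have "\<bar>cov1\<bar> * \<bar>cov1\<bar> < cov0 * cov0"
    using abs_cov1_less_cov0 by (intro mult_strict_mono) auto
  then have D: "D \<noteq> 0" by (simp add: D_def abs_mult_self_eq)
  define \<alpha> where "\<alpha> v = (if v = [] then cov0 * f [] - cov1 * f [0] else cov0 * f [0] - cov1 * f []) / D"
    for v :: "nat list"
  have "\<alpha> [] * cov0 + \<alpha> [0] * cov1 = f []" "\<alpha> [] * cov1 + \<alpha> [0] * cov0 = f [0]"
    using D by (simp_all add: \<alpha>_def D_def divide_simps) (simp_all add: algebra_simps)
  moreover have "cov [0] [0] = cov0" "cov [0] [] = cov1"
    using cov_diag[of "[0]"] cov_sym[of "[0]" "[]"] d_ge_3 by auto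
  ultimately show ?thesis unfolding centre by (intro exI[of _ \<alpha>]) simp
qed

lemma sum_blocks_cov_child_diff:
  assumes u: "u \<in> inner_ball d e K" and v1: "v1 \<in> children d e u" and v2: "v2 \<in> children d e u"
  shows "(\<Sum>u'\<in>inner_ball d e K. \<Sum>v\<in>children d e u'. sibling_contrast f e v * cov v1 v)
       - (\<Sum>u'\<in>inner_ball d e K. \<Sum>v\<in>children d e u'. sibling_contrast f e v * cov v2 v)
       = f v1 - f v2"
proof -
  let ?block = "\<lambda>u' x. \<Sum>v\<in>children d e u'. sibling_contrast f e v * cov x v"
  have uV: "u \<in> V" using u by (simp add: inner_ball_def)
  have "?block u' v1 - ?block u' v2 = (if u' = u then f v1 - f v2 else 0)"
    if "u' \<in> inner_ball d e K" for u'
    using sum_sibling_contrast_cov_other_block[OF uV _ _ v1 v2, of u'] that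
      sum_sibling_contrast_cov_child[OF uV v1] sum_sibling_contrast_cov_child[OF uV v2]
    by (auto simp: inner_ball_def)
  then have "(\<Sum>u'\<in>inner_ball d e K. ?block u' v1 - ?block u' v2) = f v1 - f v2"
    using u finite_inner_ball by (simp cong: sum.cong)
  then show ?thesis by (simp add: sum_subtractf)
qed

lemma not_prefix_of_centre:
  "b \<in> centre d e \<Longrightarrow> v \<in> children d e u \<Longrightarrow> \<not> prefix v b"
  using depth_prefix_mono[of v b e] depth_child[of v d e u] by (auto simp: centre_def)

lemma eigen_solution_cov_representation:
  fixes f :: "nat list \<Rightarrow> real"
  assumes f: "\<And>u. u \<in> inner_ball d e K \<Longrightarrow> l * f u = (\<Sum>w\<in>tree_nbrs d u. f w)"
  shows "\<exists>\<gamma>. \<forall>x\<in>depth_ball d e K. f x = (\<Sum>v\<in>depth_ball d e K. \<gamma> v * cov x v)"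
proof -
  obtain \<alpha> where \<alpha>: "\<And>b. b \<in> centre d e \<Longrightarrow> (\<Sum>v\<in>centre d e. \<alpha> v * cov b v) = f b"
    using centre_coefficients_exist by blast
  define \<gamma> where "\<gamma> v = (if v \<in> centre d e then \<alpha> v else sibling_contrast f e v)" for v
  define G where "G x = (\<Sum>v\<in>depth_ball d e K. \<gamma> v * cov x v)" for x
  have "v \<notin> centre d e" if "v \<in> children d e u" for u v
    using depth_child[OF that] by (simp add: centre_def)
  then have G_split: "G x = (\<Sum>v\<in>centre d e. \<alpha> v * cov x v) +
      (\<Sum>u\<in>inner_ball d e K. \<Sum>v\<in>children d e u. sibling_contrast f e v * cov x v)" for x
    unfolding G_def sum_depth_ball by (simp add: \<gamma>_def cong: sum.cong)
  have "l * G u = (\<Sum>w\<in>tree_nbrs d u. G w)" if "u \<in> inner_ball d e K" for u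
  proof -
    have u: "u \<in> V" using that by (simp add: inner_ball_def)
    have "(\<Sum>w\<in>tree_nbrs d u. G w) = (\<Sum>v\<in>depth_ball d e K. \<gamma> v * (\<Sum>w\<in>tree_nbrs d u. cov w v))"
      unfolding G_def by (subst sum.swap) (simp add: sum_distrib_left)
    also have "\<dots> = (\<Sum>v\<in>depth_ball d e K. \<gamma> v * (l * cov u v))"
      using cov_eigen_equation[OF u] depth_ball_subset_vertices[of d e K] by (auto intro!: sum.cong)
    finally show ?thesis by (simp add: G_def sum_distrib_left mult.left_commute)
  qed
  moreover have "f b = G b" if b: "b \<in> centre d e" for b
    using G_split[of b] \<alpha>[OF b] not_prefix_of_centre[OF b] b sum_sibling_contrast_cov_far
    by (simp add: inner_ball_def centre_def)
  moreover have "f v1 - f v2 = G v1 - G v2"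
    if u: "u \<in> inner_ball d e K" and v: "v1 \<in> children d e u" "v2 \<in> children d e u" for u v1 v2
  proof -
    have "cov v1 b = cov v2 b" if "b \<in> centre d e" for b
      using cov_children_of_vertex[of u b v1 e v2] not_prefix_of_centre[OF that] v u that
      by (simp add: cov_sym inner_ball_def centre_def)
    then show ?thesis
      using G_split[of v1] G_split[of v2] sum_blocks_cov_child_diff[OF u v, of f]
      by (simp cong: sum.cong)
  qed
  ultimately have "f x = G x" if "x \<in> depth_ball d e K" for x
    using eigen_solutions_eq_on_depth_ball[of d e K l f G, OF f] that by blast
  then show ?thesis unfolding G_def by blast
qed

lemma annihilator_of_process_annihilates_eigen_solutions:
  fixes c f :: "nat list \<Rightarrow> real"
  assumes AE: "AE \<omega> in M. (\<Sum>x\<in>depth_ball d e K. c x * X x \<omega>) = 0"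
    and f: "\<And>u. u \<in> inner_ball d e K \<Longrightarrow> l * f u = (\<Sum>w\<in>tree_nbrs d u. f w)"
  shows "(\<Sum>x\<in>depth_ball d e K. c x * f x) = 0"
proof -
  let ?B = "depth_ball d e K"
  obtain \<gamma> where \<gamma>: "\<And>x. x \<in> ?B \<Longrightarrow> f x = (\<Sum>v\<in>?B. \<gamma> v * cov x v)"
    using eigen_solution_cov_representation[OF f] by blast
  have "(\<Sum>x\<in>?B. c x * f x) = (\<Sum>x\<in>?B. \<Sum>v\<in>?B. c x * (\<gamma> v * cov x v))"
    by (simp add: \<gamma> sum_distrib_left)
  also have "\<dots> = (\<Sum>v\<in>?B. \<Sum>x\<in>?B. \<gamma> v * (c x * cov x v))"
    by (subst sum.swap) (simp add: mult.left_commute)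
  also have "\<dots> = (\<Sum>v\<in>?B. \<gamma> v * (\<Sum>x\<in>?B. c x * cov x v))"
    by (simp add: sum_distrib_left)
  also have "\<dots> = 0"
    using sum_cov_eq_0_if_AE[OF finite_depth_ball depth_ball_subset_vertices _ AE]
      depth_ball_subset_vertices by (simp add: subset_iff)
  finally show ?thesis .
qed

lemma W_space_subset_span_marginal_support:
  "W_space d l (depth_ball d e K) \<subseteq> fun_span (marginal_support M X (depth_ball d e K))"
proof
  let ?S = "depth_ball d e K"
  fix f assume f: "f \<in> W_space d l ?S"
  show "f \<in> fun_span (marginal_support M X ?S)"
  proof (rule ccontr)
    assume f_span: "f \<notin> fun_span (marginal_support M X ?S)"
    obtain c where c: "\<And>x. x \<in> marginal_support M X ?S \<Longrightarrow> (\<Sum>u\<in>?S. c u * x u) = 0"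
      and cf: "(\<Sum>u\<in>?S. c u * f u) \<noteq> 0"
    proof (rule separating_functional[where S = ?S and A = "marginal_support M X ?S" and f = f])
      show "\<And>x u. x \<in> marginal_support M X ?S \<Longrightarrow> u \<notin> ?S \<Longrightarrow> x u = 0"
        by (simp add: marginal_support_iff)
      show "\<And>u. u \<notin> ?S \<Longrightarrow> f u = 0" using f by (simp add: W_space_def)
      show "finite ?S" by (rule finite_depth_ball)
      show "f \<notin> fun_span (marginal_support M X ?S)" by (rule f_span)
    qed (rule that)
    have AE: "AE \<omega> in M. (\<Sum>u\<in>?S. c u * X u \<omega>) = 0"
      using AE_process_on_in_marginal_support[OF finite_depth_ball depth_ball_subset_vertices,
          of e K]
    proof eventually_elim
      case (elim \<omega>)
      have "(\<Sum>u\<in>?S. c u * X u \<omega>) = (\<Sum>u\<in>?S. c u * process_on ?S \<omega> u)"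
        by (simp add: process_on_def)
      then show ?case using c[OF elim] by simp
    qed
    have "l * f u = (\<Sum>w\<in>tree_nbrs d u. f w)" if u: "u \<in> inner_ball d e K" for u
    proof (rule W_space_eigen_equation[OF f])
      have uV: "u \<in> V" using u by (simp add: inner_ball_def)
      show uS: "u \<in> ?S" using u inner_ball_subset_depth_ball[of d e K] by blast
      show "tree_ball d 1 {u} \<subseteq> ?S"
        using nbrs_inner_ball_subset[OF u] uS unfolding tree_ball_1[OF uV] by blast
    qed
    from annihilator_of_process_annihilates_eigen_solutions[OF AE this] cf show False
      by simp
  qed
qed

end

lemma tree_ball_C_or_edge_eq_depth_ball:
  assumes "d \<ge> 1" "S = tree_ball d k (tree_C d) \<or> S = tree_ball d k tree_edge"
  obtains e K where "S = depth_ball d e K"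
proof -
  have "tree_ball d k (tree_C d) = tree_ball d (k + 1) {[]}"
    by (simp only: tree_C_def tree_root_def tree_ball_tree_ball)
  also have "\<dots> = depth_ball d False (k + 1)"
    using tree_ball_eq_depth_ball[OF assms(1), of "k + 1" False] by (simp only: if_False)
  moreover have "tree_ball d k tree_edge = depth_ball d True k"
    using tree_ball_eq_depth_ball[OF assms(1), of k True] by (simp add: tree_edge_def tree_root_def)
  ultimately show ?thesis using assms(2) that by blast
qed

theorem mainTheorem5:
  fixes d :: nat and k :: nat and l :: real
    and M :: "'a measure" and X :: "nat list \<Rightarrow> 'a \<Rightarrow> real" and S :: "nat list set"
  assumes "d \<ge> 3"
    and "S = tree_ball d k (tree_C d) \<or> S = tree_ball d k tree_edge"
    and "eigenvector_process d l M X"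
    and "\<bar>l\<bar> < real d"
  shows "fun_span (marginal_support M X S) = W_space d l S"
proof -
  interpret nondegenerate_tree_eigen_process d l M X
    using assms by unfold_locales auto
  have "d \<ge> 1" using assms(1) by simp
  then obtain e K where S: "S = depth_ball d e K"
    using assms(2) by (rule tree_ball_C_or_edge_eq_depth_ball)
  show ?thesis
  proof
    show "fun_span (marginal_support M X S) \<subseteq> W_space d l S"
      unfolding fun_span_def S
      using marginal_support_subset_W_space[OF depth_ball_subset_vertices] W_space_subspace
      by (rule fun_vs.span_minimal)
    show "W_space d l S \<subseteq> fun_span (marginal_support M X S)"
      unfolding S by (rule W_space_subset_span_marginal_support)
  qed
qed

end
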